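(* If a graph $G$ with $n\ge 2$ vertices contains a matching pair $(M_1,M_2)$ of size $X=|M_1|+|M_2|$, then the $(1,2)$-TSP cost of $G$ is at most $2n-\tfrac{3}{4}X$.
   Context: A matching pair of $G$ is a pair $(M_1,M_2)$ of edge-disjoint matchings of $G$; its size is $|M_1|+|M_2|$. The $(1,2)$-TSP cost of a graph $G=(V,E)$ on $n$ vertices is $\min\sum_{i=1}^n D(v_i,v_{i+1})$ over cyclic orderings $(v_1,\dots,v_n)$ of $V$ ($v_{n+1}=v_1$), where $D(u,v)=1$ if $uv\in E$ and $D(u,v)=2$ otherwise. *)

theory Defs
  imports Complex_Main
begin

definition simple_graph :: "'a set \<Rightarrow> 'a set set \<Rightarrow> bool" where
  "simple_graph V E \<longleftrightarrow> finite V \<and> (\<forall>e\<in>E. e \<subseteq> V \<and> card e = 2)"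

definition matching :: "'a set set \<Rightarrow> 'a set set \<Rightarrow> bool" where
  "matching E M \<longleftrightarrow> M \<subseteq> E \<and> (\<forall>e1\<in>M. \<forall>e2\<in>M. e1 \<noteq> e2 \<longrightarrow> e1 \<inter> e2 = {})"

definition matching_pair :: "'a set set \<Rightarrow> 'a set set \<Rightarrow> 'a set set \<Rightarrow> bool" where
  "matching_pair E M1 M2 \<longleftrightarrow> matching E M1 \<and> matching E M2 \<and> M1 \<inter> M2 = {}"

definition dist12 :: "'a set set \<Rightarrow> 'a \<Rightarrow> 'a \<Rightarrow> nat" where
  "dist12 E u v = (if {u, v} \<in> E then 1 else 2)"

definition tour_cost :: "'a set set \<Rightarrow> 'a list \<Rightarrow> nat" where
  "tour_cost E vs = (\<Sum>i<length vs. dist12 E (vs ! i) (vs ! ((i + 1) mod length vs)))"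

definition tsp12_cost :: "'a set \<Rightarrow> 'a set set \<Rightarrow> nat" where
  "tsp12_cost V E = Min {tour_cost E vs | vs. distinct vs \<and> set vs = V}"

end

theory Submission imports Defs begin

text \<open>The edges of M1 \<union> M2 contain no three distinct, pairwise intersecting edges: such a triple
would be a triangle or a star at a vertex of degree three, and both force two edges of the same
matching to meet. Hence M1 \<union> M2 splits into vertex-disjoint paths and cycles of length at least
four. Peel off a maximal path P with k edges: every edge touching P lies on P, except possibly
the edge closing a cycle, and then k \<ge> 3; so at most k + 1 \<le> 4k/3 edges are removed while P
contributes k adjacent pairs. Concatenating the peeled paths gives an ordering of V in which at
least 3X/4 cyclically consecutive pairs are edges of cost 1, all other pairs costing at most 2.\<close>

definition no_meeting_triple :: "'a set set \<Rightarrow> bool" where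
  "no_meeting_triple F \<longleftrightarrow> (\<forall>e1\<in>F. \<forall>e2\<in>F. \<forall>e3\<in>F.
     e1 \<inter> e2 \<noteq> {} \<longrightarrow> e1 \<inter> e3 \<noteq> {} \<longrightarrow> e2 \<inter> e3 \<noteq> {} \<longrightarrow> e1 = e2 \<or> e1 = e3 \<or> e2 = e3)"

definition adjacent_count :: "'a set set \<Rightarrow> 'a list \<Rightarrow> nat" where
  "adjacent_count F xs = card {i. Suc i < length xs \<and> {xs!i, xs!Suc i} \<in> F}"

definition is_path :: "'a set set \<Rightarrow> 'a list \<Rightarrow> bool" where
  "is_path F xs \<longleftrightarrow> (\<forall>i. Suc i < length xs \<longrightarrow> {xs!i, xs!Suc i} \<in> F)"

definition path_edges :: "'a list \<Rightarrow> 'a set set" where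
  "path_edges xs = (\<lambda>i. {xs!i, xs!Suc i}) ` {i. Suc i < length xs}"

definition maximal_path :: "'a set set \<Rightarrow> 'a list \<Rightarrow> bool" where
  "maximal_path F P \<longleftrightarrow> P \<noteq> [] \<and> distinct P \<and> is_path F P \<and>
     (\<forall>y. {hd P, y} \<in> F \<longrightarrow> y \<in> set P) \<and> (\<forall>y. {last P, y} \<in> F \<longrightarrow> y \<in> set P)"

lemma no_meeting_triple_subset: "no_meeting_triple F \<Longrightarrow> F' \<subseteq> F \<Longrightarrow> no_meeting_triple F'"
  unfolding no_meeting_triple_def by blast

lemma matching_pair_no_meeting_triple:
  assumes "matching_pair E M1 M2"
  shows "no_meeting_triple (M1 \<union> M2)"
proof -
  have M1: "\<forall>e1\<in>M1. \<forall>e2\<in>M1. e1 \<noteq> e2 \<longrightarrow> e1 \<inter> e2 = {}"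
   and M2: "\<forall>e1\<in>M2. \<forall>e2\<in>M2. e1 \<noteq> e2 \<longrightarrow> e1 \<inter> e2 = {}"
    using assms unfolding matching_pair_def matching_def by simp_all
  show ?thesis unfolding no_meeting_triple_def
  proof (intro ballI impI)
    fix e1 e2 e3 assume e: "e1 \<in> M1 \<union> M2" "e2 \<in> M1 \<union> M2" "e3 \<in> M1 \<union> M2"
      and meet: "e1 \<inter> e2 \<noteq> {}" "e1 \<inter> e3 \<noteq> {}" "e2 \<inter> e3 \<noteq> {}"
    show "e1 = e2 \<or> e1 = e3 \<or> e2 = e3"
      using e M1 M2 meet by (elim UnE) meson+
  qed
qed

lemma adjacent_count_mono: "F' \<subseteq> F \<Longrightarrow> adjacent_count F' xs \<le> adjacent_count F xs"
  unfolding adjacent_count_def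
  by (rule card_mono) (auto intro: finite_subset[of _ "{..<length xs}"])

lemma adjacent_count_append:
  assumes "is_path F P"
  shows "(length P - 1) + adjacent_count F ws \<le> adjacent_count F (P @ ws)"
proof -
  define I where "I = {i. Suc i < length (P @ ws) \<and> {(P @ ws)!i, (P @ ws)!Suc i} \<in> F}"
  define B where "B = {i. Suc i < length ws \<and> {ws!i, ws!Suc i} \<in> F}"
  have "finite I" unfolding I_def by (rule finite_subset[of _ "{..<length (P @ ws)}"]) auto
  moreover have "{..<length P - 1} \<subseteq> I"
    using assms unfolding I_def is_path_def by (auto simp: nth_append)
  moreover have "(+) (length P) ` B \<subseteq> I"
    unfolding I_def B_def by (auto simp: nth_append)
  ultimately have "card ({..<length P - 1} \<union> (+) (length P) ` B) \<le> card I"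
    by (intro card_mono) auto
  moreover have "card ({..<length P - 1} \<union> (+) (length P) ` B) = (length P - 1) + card B"
    by (subst card_Un_disjoint)
       (auto simp: card_image B_def intro!: finite_imageI intro: finite_subset[of _ "{..<length ws}"])
  ultimately show ?thesis unfolding adjacent_count_def I_def[symmetric] B_def[symmetric] by simp
qed

lemma tour_cost_plus_adjacent_count_le:
  assumes "F \<subseteq> E" "vs \<noteq> []"
  shows "tour_cost E vs + adjacent_count F vs \<le> 2 * length vs"
proof -
  obtain m where m: "length vs = Suc m" using assms(2) by (cases vs) auto
  define d where "d i = dist12 E (vs ! i) (vs ! ((i + 1) mod length vs))" for i
  define ind where "ind i = (if {vs!i, vs!Suc i} \<in> F then 1 else 0 :: nat)" for i
  have cost: "tour_cost E vs = (\<Sum>i<m. d i) + d m"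
    unfolding tour_cost_def d_def m by simp
  have "{i. Suc i < length vs \<and> {vs!i, vs!Suc i} \<in> F} = {i\<in>{..<m}. {vs!i, vs!Suc i} \<in> F}"
    using m by auto
  then have count: "adjacent_count F vs = (\<Sum>i<m. ind i)"
    unfolding adjacent_count_def ind_def by (simp add: sum.If_cases Int_def conj_commute)
  have "d i + ind i \<le> 2" if "i < m" for i
  proof -
    have "(i + 1) mod length vs = Suc i" using that m by simp
    then show ?thesis using assms(1) unfolding d_def ind_def dist12_def by auto
  qed
  then have "(\<Sum>i<m. d i + ind i) \<le> (\<Sum>i<m. 2)" by (intro sum_mono) simp
  moreover have "d m \<le> 2" unfolding d_def dist12_def by auto
  ultimately show ?thesis using cost count m by (simp add: sum.distrib)
qed

lemma tsp12_cost_le_tour_cost: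
  assumes "finite V" "distinct vs" "set vs = V"
  shows "tsp12_cost V E \<le> tour_cost E vs"
proof -
  have "{vs. distinct vs \<and> set vs = V} \<subseteq> {xs. set xs \<subseteq> V \<and> length xs \<le> card V}"
    by (auto simp flip: distinct_card)
  then have "finite {vs. distinct vs \<and> set vs = V}"
    using finite_lists_length_le[OF assms(1)] finite_subset by blast
  then have "finite {tour_cost E vs | vs. distinct vs \<and> set vs = V}"
    by (rule finite_image_set)
  then show ?thesis unfolding tsp12_cost_def using assms(2,3) by (intro Min_le) auto
qed

lemma maximal_path_exists:
  assumes "finite V" "V \<noteq> {}" "\<forall>e\<in>F. e \<subseteq> V"
  shows "\<exists>P. maximal_path F P \<and> set P \<subseteq> V"
proof -
  define L where "L = {xs. xs \<noteq> [] \<and> distinct xs \<and> set xs \<subseteq> V \<and> is_path F xs}"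
  have "L \<subseteq> {xs. set xs \<subseteq> V \<and> length xs \<le> card V}"
    unfolding L_def using assms(1) by (auto simp flip: distinct_card intro: card_mono)
  then have finL: "finite L" using finite_lists_length_le[OF assms(1)] finite_subset by blast
  obtain v where "v \<in> V" using assms(2) by auto
  then have "[v] \<in> L" unfolding L_def is_path_def by auto
  then have "Max (length ` L) \<in> length ` L" using finL by (intro Max_in) auto
  then obtain P where PL: "P \<in> L" and "length P = Max (length ` L)" by auto
  then have longest: "\<And>Q. Q \<in> L \<Longrightarrow> length Q \<le> length P" using finL by simp
  have P: "P \<noteq> []" "distinct P" "set P \<subseteq> V" "is_path F P" using PL unfolding L_def by auto
  have "y \<in> set P" if "{hd P, y} \<in> F" for y
  proof (rule ccontr)
    assume "y \<notin> set P"
    moreover have "is_path F (y # P)"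
      using that P(1,4) unfolding is_path_def
      by (auto simp: hd_conv_nth insert_commute nth_Cons split: nat.split)
    ultimately have "y # P \<in> L" using that assms(3) P unfolding L_def by auto
    then show False using longest by fastforce
  qed
  moreover have "y \<in> set P" if "{last P, y} \<in> F" for y
  proof (rule ccontr)
    assume "y \<notin> set P"
    moreover have "is_path F (P @ [y])"
      using that P(1,4) unfolding is_path_def
      by (auto simp: nth_append last_conv_nth less_Suc_eq dest: sym[of "Suc _"])
    ultimately have "P @ [y] \<in> L" using that assms(3) P unfolding L_def by auto
    then show False using longest by fastforce
  qed
  ultimately show ?thesis using P unfolding maximal_path_def by blast
qed

lemma no_meeting_triple_common_vertex:
  assumes "no_meeting_triple F" "e \<in> F" "e1 \<in> F" "e2 \<in> F" "e1 \<noteq> e2"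
    and "x \<in> e" "x \<in> e1" "x \<in> e2"
  shows "e = e1 \<or> e = e2"
proof -
  have "e \<inter> e1 \<noteq> {}" "e \<inter> e2 \<noteq> {}" "e1 \<inter> e2 \<noteq> {}" using assms(6-8) by blast+
  then show ?thesis using assms(1-5) unfolding no_meeting_triple_def by blast
qed

lemma edge_at_interior_vertex:
  assumes "is_path F P" "distinct P" "no_meeting_triple F"
    and i: "0 < i" "Suc i < length P" and e: "e \<in> F" "P!i \<in> e"
  shows "e \<in> path_edges P"
proof -
  define e1 where "e1 = {P!(i-1), P!i}"
  define e2 where "e2 = {P!i, P!Suc i}"
  have "Suc (i - 1) = i" using i(1) by simp
  then have e1: "e1 \<in> F" using assms(1) i(2) unfolding is_path_def e1_def by (metis Suc_lessD)
  have e2: "e2 \<in> F" using assms(1) i unfolding is_path_def e2_def by auto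
  have "P!(i-1) \<noteq> P!i" "P!(i-1) \<noteq> P!Suc i"
    using assms(2) i by (simp_all add: nth_eq_iff_index_eq)
  then have "e1 \<noteq> e2" unfolding e1_def e2_def by (simp add: doubleton_eq_iff)
  then have "e = e1 \<or> e = e2"
    using no_meeting_triple_common_vertex[OF assms(3) e(1) e1 e2 _ e(2)] unfolding e1_def e2_def by simp
  moreover have "e1 \<in> path_edges P" unfolding path_edges_def e1_def using i
    by (intro image_eqI[of _ _ "i-1"]) auto
  moreover have "e2 \<in> path_edges P" unfolding path_edges_def e2_def using i by auto
  ultimately show ?thesis by auto
qed

lemma edge_meeting_maximal_path:
  assumes P: "maximal_path F P" and F: "\<forall>e\<in>F. card e = 2" "no_meeting_triple F"
    and e: "e \<in> F" "e \<inter> set P \<noteq> {}"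
  shows "e \<in> path_edges P \<or> e = {hd P, last P}"
proof -
  have path: "P \<noteq> []" "distinct P" "is_path F P" using P unfolding maximal_path_def by auto
  have end_or_interior: "x = hd P \<or> x = last P \<or> e \<in> path_edges P" if "x \<in> e" "x \<in> set P" for x
  proof -
    obtain i where i: "i < length P" "P!i = x" using \<open>x \<in> set P\<close> by (auto simp: in_set_conv_nth)
    show ?thesis
    proof (cases "0 < i \<and> Suc i < length P")
      case True
      then show ?thesis using edge_at_interior_vertex[OF path(3,2) F(2)] e(1) i that(1) by blast
    next
      case False
      then have "i = 0 \<or> i = length P - 1" using i by auto
      then show ?thesis using i path(1) by (auto simp: hd_conv_nth last_conv_nth)
    qed
  qed
  obtain x where x: "x \<in> e" "x \<in> set P" using e(2) by auto
  obtain y where xy: "e = {x, y}" "x \<noteq> y"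
    using F(1) e(1) x(1) by (metis card_2_iff insert_commute insertE singletonD)
  show ?thesis
  proof (cases "e \<in> path_edges P")
    case False
    then have x_end: "x = hd P \<or> x = last P" using end_or_interior x by blast
    then have "y \<in> set P" using P e(1) xy(1) unfolding maximal_path_def by auto
    then have "y = hd P \<or> y = last P" using end_or_interior xy False by blast
    then show ?thesis using x_end xy by (auto simp: insert_commute)
  qed simp
qed

lemma closing_edge_long_path:
  assumes path: "P \<noteq> []" "distinct P" "is_path F P"
    and F: "\<forall>e\<in>F. card e = 2" "no_meeting_triple F"
    and closing: "{hd P, last P} \<in> F" "{hd P, last P} \<notin> path_edges P"
  shows "4 \<le> length P"
proof (rule ccontr)
  assume "\<not> 4 \<le> length P"
  moreover have "0 < length P" using path(1) by simp
  ultimately have "length P = 1 \<or> length P = 2 \<or> length P = 3" by linarith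
  moreover have "length P \<noteq> 1"
  proof
    assume "length P = 1"
    then have "hd P = last P" using path(1) by (auto simp: hd_conv_nth last_conv_nth)
    then show False using F(1) closing(1) by fastforce
  qed
  moreover have "length P \<noteq> 2"
  proof
    assume len: "length P = 2"
    then have "{hd P, last P} = {P!0, P!Suc 0}" using path(1) by (auto simp: hd_conv_nth last_conv_nth)
    moreover have "{P!0, P!Suc 0} \<in> path_edges P" unfolding path_edges_def using len by auto
    ultimately show False using closing(2) by simp
  qed
  moreover have "length P \<noteq> 3"
  proof
    assume len: "length P = 3"
    then obtain a b c where abc: "P = [a, b, c]" by (auto simp: numeral_3_eq_3 length_Suc_conv)
    have "{P!0, P!Suc 0} \<in> F" "{P!1, P!Suc 1} \<in> F"
      using path(3) len unfolding is_path_def by auto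
    then have ab: "{a, b} \<in> F" and bc: "{b, c} \<in> F" using abc by simp_all
    have ac: "{a, c} \<in> F" using closing(1) abc by simp
    have "{a, b} = {b, c} \<or> {a, b} = {a, c} \<or> {b, c} = {a, c}"
      using F(2)[unfolded no_meeting_triple_def, rule_format, OF ab bc ac] by auto
    moreover have "a \<noteq> b" "b \<noteq> c" "a \<noteq> c" using path(2) abc by auto
    ultimately show False by (auto simp: doubleton_eq_iff)
  qed
  ultimately show False by blast
qed

lemma card_edges_meeting_maximal_path:
  assumes P: "maximal_path F P" and F: "\<forall>e\<in>F. card e = 2" "no_meeting_triple F"
  shows "3 * card {e\<in>F. e \<inter> set P \<noteq> {}} \<le> 4 * (length P - 1)"
proof -
  define k where "k = length P - 1"
  define C where "C = (if 4 \<le> length P then {{hd P, last P}} else {})"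
  have path: "P \<noteq> []" "distinct P" "is_path F P" using P unfolding maximal_path_def by auto
  have indices: "{i. Suc i < length P} = {..<k}" unfolding k_def by auto
  have "{e\<in>F. e \<inter> set P \<noteq> {}} \<subseteq> path_edges P \<union> C"
    using edge_meeting_maximal_path[OF P F] closing_edge_long_path[OF path F]
    unfolding C_def by fastforce
  then have "card {e\<in>F. e \<inter> set P \<noteq> {}} \<le> card (path_edges P \<union> C)"
    unfolding path_edges_def C_def indices by (intro card_mono) auto
  also have "\<dots> \<le> card (path_edges P) + card C" by (rule card_Un_le)
  also have "\<dots> \<le> k + card C"
    unfolding path_edges_def indices using card_image_le[of "{..<k}"] by simp
  finally show ?thesis unfolding C_def k_def by (auto split: if_splits)
qed

lemma ordering_with_many_adjacent_edges:
  assumes "finite V" "\<forall>e\<in>F. e \<subseteq> V \<and> card e = 2" "no_meeting_triple F"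
  shows "\<exists>vs. distinct vs \<and> set vs = V \<and> 3 * card F \<le> 4 * adjacent_count F vs"
  using assms
proof (induction "card V" arbitrary: V F rule: less_induct)
  case less
  show ?case
  proof (cases "V = {}")
    case True
    then have "F = {}" using less.prems(2) by fastforce
    then show ?thesis using True by (auto simp: adjacent_count_def intro: exI[of _ "[]"])
  next
    case False
    have "\<forall>e\<in>F. e \<subseteq> V" using less.prems(2) by blast
    then obtain P where P: "maximal_path F P" "set P \<subseteq> V"
      using maximal_path_exists[OF less.prems(1) False] by blast
    define T where "T = {e\<in>F. e \<inter> set P \<noteq> {}}"
    define F' where "F' = {e\<in>F. e \<inter> set P = {}}"
    have "P \<noteq> []" using P(1) unfolding maximal_path_def by simp
    then have "V - set P \<subset> V" using P(2) by (cases P) auto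
    then have "card (V - set P) < card V" using less.prems(1) by (rule psubset_card_mono[rotated])
    moreover have "\<forall>e\<in>F'. e \<subseteq> V - set P \<and> card e = 2" using less.prems(2) unfolding F'_def by auto
    moreover have "no_meeting_triple F'"
      using less.prems(3) by (rule no_meeting_triple_subset) (auto simp: F'_def)
    ultimately obtain ws where ws: "distinct ws" "set ws = V - set P"
        "3 * card F' \<le> 4 * adjacent_count F' ws"
      using less.hyps[of "V - set P" F'] less.prems(1) by auto
    have "finite F" using less.prems(1,2) by (intro finite_subset[of F "Pow V"]) auto
    moreover have F_split: "F = F' \<union> T" "F' \<inter> T = {}" unfolding F'_def T_def by auto
    ultimately have "finite F'" "finite T" by (metis finite_Un)+
    then have "card F = card F' + card T" using F_split card_Un_disjoint by metis
    moreover have "3 * card T \<le> 4 * (length P - 1)"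
      unfolding T_def using card_edges_meeting_maximal_path[OF P(1)] less.prems(2,3) by simp
    moreover have "(length P - 1) + adjacent_count F ws \<le> adjacent_count F (P @ ws)"
      using P(1) by (intro adjacent_count_append) (simp add: maximal_path_def)
    moreover have "adjacent_count F' ws \<le> adjacent_count F ws"
      by (rule adjacent_count_mono) (auto simp: F'_def)
    ultimately have "3 * card F \<le> 4 * adjacent_count F (P @ ws)" using ws(3) by linarith
    moreover have "distinct (P @ ws)" "set (P @ ws) = V"
      using P ws unfolding maximal_path_def by auto
    ultimately show ?thesis by blast
  qed
qed

theorem mainTheorem16:
  fixes V :: "'a set" and E M1 M2 :: "'a set set"
  assumes "simple_graph V E"
    and "card V \<ge> 2"
    and "matching_pair E M1 M2"
  shows "real (tsp12_cost V E) \<le> 2 * real (card V) - 3 / 4 * real (card M1 + card M2)"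
proof -
  have finV: "finite V" and edges: "\<forall>e\<in>E. e \<subseteq> V \<and> card e = 2"
    using assms(1) unfolding simple_graph_def by auto
  have sub: "M1 \<union> M2 \<subseteq> E" and disj: "M1 \<inter> M2 = {}"
    using assms(3) unfolding matching_pair_def matching_def by auto
  have "finite E" using finV edges by (intro finite_subset[of E "Pow V"]) auto
  then have card_union: "card (M1 \<union> M2) = card M1 + card M2"
    using sub disj by (intro card_Un_disjoint) (auto intro: finite_subset)
  obtain vs where vs: "distinct vs" "set vs = V"
      "3 * card (M1 \<union> M2) \<le> 4 * adjacent_count (M1 \<union> M2) vs"
    using ordering_with_many_adjacent_edges[OF finV _ matching_pair_no_meeting_triple[OF assms(3)]]
      edges sub by blast
  have len: "length vs = card V" using vs(1,2) distinct_card by metis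
  then have "vs \<noteq> []" using assms(2) by auto
  then have "tour_cost E vs + adjacent_count (M1 \<union> M2) vs \<le> 2 * length vs"
    by (rule tour_cost_plus_adjacent_count_le[OF sub])
  moreover have "tsp12_cost V E \<le> tour_cost E vs"
    using tsp12_cost_le_tour_cost[OF finV vs(1,2)] .
  ultimately have "4 * tsp12_cost V E + 3 * card (M1 \<union> M2) \<le> 8 * card V"
    using vs(3) len by linarith
  then have "real (4 * tsp12_cost V E + 3 * card (M1 \<union> M2)) \<le> real (8 * card V)"
    by (simp only: of_nat_le_iff)
  then have "4 * real (tsp12_cost V E) + 3 * real (card M1 + card M2) \<le> 8 * real (card V)"
    unfolding card_union by simp
  then show ?thesis by linarith
qed

end
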